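(* Let $R$ be a reflexive relation on $U$. Then $\mathrm{DM(RS)}$ is spatial if and only if both $\wp(U)^{\blacktriangle}$ and $\wp(U)^{\vartriangle}$ are spatial.
   Context: Let $U$ be a set and $R\subseteq U\times U$ a binary relation. For $x\in U$, $R(x)=\{y\in U\mid (x,y)\in R\}$ and $\breve R(x)=\{y\in U\mid (y,x)\in R\}$. For $X\subseteq U$: $X^{\blacktriangledown}=\{x\in U\mid R(x)\subseteq X\}$, $X^{\blacktriangle}=\{x\in U\mid R(x)\cap X\neq\emptyset\}$, $X^{\triangledown}=\{x\in U\mid \breve R(x)\subseteq X\}$, $X^{\vartriangle}=\{x\in U\mid \breve R(x)\cap X\neq\emptyset\}$; composites like $X^{\vartriangle\blacktriangledown}$ mean $(X^{\vartriangle})^{\blacktriangledown}$. $\wp(U)^{\blacktriangledown}=\{X^{\blacktriangledown}\mid X\subseteq U\}$ and similarly $\wp(U)^{\blacktriangle},\wp(U)^{\vartriangle}$; complete lattices under $\subseteq$ (joins in $\wp(U)^{\blacktriangle},\wp(U)^{\vartriangle}$ are unions). $\mathcal S=\{x\in U\mid |R(x)|=1\}$. $\mathrm{RS}=\{(X^{\blacktriangledown},X^{\blacktriangle})\mid X\subseteq U\}$ ordered coordinatewise; $\mathrm{DM(RS)}$ is its Dedekind–MacNeille completion, identified with $\{(A,B)\in\wp(U)^{\blacktriangledown}\times\wp(U)^{\blacktriangle}\mid A^{\vartriangle\blacktriangle}\subseteq B,\ A\cap\mathcal S=B\cap\mathcal S\}$ ordered coordinatewise, with meets $\bigwedge_i(X_i,Y_i)=(\bigcap_iX_i,(\bigcap_iY_i)^{\triangledown\blacktriangle})$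 and joins $\bigvee_i(X_i,Y_i)=((\bigcup_iX_i)^{\vartriangle\blacktriangledown},\bigcup_iY_i)$. An element $j$ of a complete lattice $L$ is completely join-irreducible if $j=\bigvee S$ implies $j\in S$ for every $S\subseteq L$; $L$ is spatial if every element is the join of the completely join-irreducible elements below it. *)

theory Defs
  imports Main
begin

definition succR :: "('a \<times> 'a) set \<Rightarrow> 'a \<Rightarrow> 'a set" where
  "succR R x = {y. (x, y) \<in> R}"

definition predR :: "('a \<times> 'a) set \<Rightarrow> 'a \<Rightarrow> 'a set" where
  "predR R x = {y. (y, x) \<in> R}"

definition lowR :: "'a set \<Rightarrow> ('a \<times> 'a) set \<Rightarrow> 'a set \<Rightarrow> 'a set" where
  "lowR U R X = {x \<in> U. succR R x \<subseteq> X}"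

definition uppR :: "'a set \<Rightarrow> ('a \<times> 'a) set \<Rightarrow> 'a set \<Rightarrow> 'a set" where
  "uppR U R X = {x \<in> U. succR R x \<inter> X \<noteq> {}}"

definition lowC :: "'a set \<Rightarrow> ('a \<times> 'a) set \<Rightarrow> 'a set \<Rightarrow> 'a set" where
  "lowC U R X = {x \<in> U. predR R x \<subseteq> X}"

definition uppC :: "'a set \<Rightarrow> ('a \<times> 'a) set \<Rightarrow> 'a set \<Rightarrow> 'a set" where
  "uppC U R X = {x \<in> U. predR R x \<inter> X \<noteq> {}}"

definition lowR_sets :: "'a set \<Rightarrow> ('a \<times> 'a) set \<Rightarrow> 'a set set" where
  "lowR_sets U R = {lowR U R X | X. X \<subseteq> U}"

definition uppR_sets :: "'a set \<Rightarrow> ('a \<times> 'a) set \<Rightarrow> 'a set set" where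
  "uppR_sets U R = {uppR U R X | X. X \<subseteq> U}"

definition uppC_sets :: "'a set \<Rightarrow> ('a \<times> 'a) set \<Rightarrow> 'a set set" where
  "uppC_sets U R = {uppC U R X | X. X \<subseteq> U}"

definition singR :: "'a set \<Rightarrow> ('a \<times> 'a) set \<Rightarrow> 'a set" where
  "singR U R = {x \<in> U. card (succR R x) = 1}"

(* DM(RS), via its identification with pairs (A,B) *)
definition DMRS :: "'a set \<Rightarrow> ('a \<times> 'a) set \<Rightarrow> ('a set \<times> 'a set) set" where
  "DMRS U R = {(A, B). A \<in> lowR_sets U R \<and> B \<in> uppR_sets U R \<and>
      uppR U R (uppC U R A) \<subseteq> B \<and> A \<inter> singR U R = B \<inter> singR U R}"

definition pair_le :: "'a set \<times> 'a set \<Rightarrow> 'a set \<times> 'a set \<Rightarrow> bool" where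
  "pair_le p q \<longleftrightarrow> fst p \<subseteq> fst q \<and> snd p \<subseteq> snd q"

definition is_lub_in :: "'b set \<Rightarrow> ('b \<Rightarrow> 'b \<Rightarrow> bool) \<Rightarrow> 'b set \<Rightarrow> 'b \<Rightarrow> bool" where
  "is_lub_in L le S x \<longleftrightarrow> x \<in> L \<and> (\<forall>s\<in>S. le s x) \<and>
      (\<forall>y\<in>L. (\<forall>s\<in>S. le s y) \<longrightarrow> le x y)"

definition completely_join_irreducible ::
    "'b set \<Rightarrow> ('b \<Rightarrow> 'b \<Rightarrow> bool) \<Rightarrow> 'b \<Rightarrow> bool" where
  "completely_join_irreducible L le j \<longleftrightarrow> j \<in> L \<and>
      (\<forall>S. S \<subseteq> L \<and> is_lub_in L le S j \<longrightarrow> j \<in> S)"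

definition spatial :: "'b set \<Rightarrow> ('b \<Rightarrow> 'b \<Rightarrow> bool) \<Rightarrow> bool" where
  "spatial L le \<longleftrightarrow> (\<forall>x\<in>L. is_lub_in L le
      {j. completely_join_irreducible L le j \<and> le j x} x)"

end

theory Submission
  imports Defs
begin

text \<open>
  Both \<open>\<wp>(U)\<^sup>\<blacktriangle>\<close> and \<open>\<wp>(U)\<^sup>\<vartriangle>\<close> are closed under arbitrary unions, and so is
  DM(RS) once \<open>(A, B)\<close> is replaced by \<open>(A\<^sup>\<vartriangle>, B)\<close> and a pair \<open>(E, B)\<close> is read as the
  disjoint union of \<open>E\<close> and \<open>B\<close>. In a union-closed family of sets, \<open>j\<close> is completely
  join-irreducible iff some point of \<open>j\<close> lies in no smaller member, and spatiality says that
  every point of every member lies in such a \<open>j\<close> below it.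

  Reflexivity gives \<open>R(x) = {x}\<close> for \<open>x \<in> S\<close>, so \<open>(K \<inter> S, K)\<close> and \<open>(E, E\<^sup>\<blacktriangle>)\<close> are pairs
  for \<open>K \<in> \<wp>(U)\<^sup>\<blacktriangle>\<close> and \<open>E \<in> \<wp>(U)\<^sup>\<vartriangle>\<close>, and \<open>{s} \<in> \<wp>(U)\<^sup>\<vartriangle>\<close> for \<open>s \<in> S\<close>.
  Hence \<open>(K \<inter> S, K)\<close> resp. \<open>(K, K\<^sup>\<blacktriangle>)\<close> is a completely join-irreducible pair whenever \<open>K\<close>
  is completely join-irreducible in \<open>\<wp>(U)\<^sup>\<blacktriangle>\<close> resp. \<open>\<wp>(U)\<^sup>\<vartriangle>\<close>; conversely, for a
  completely join-irreducible pair \<open>(E, B)\<close>, \<open>B\<close> is completely join-irreducible in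
  \<open>\<wp>(U)\<^sup>\<blacktriangle>\<close> if \<open>E \<subseteq> S\<close>, and \<open>E\<close> is completely join-irreducible in \<open>\<wp>(U)\<^sup>\<vartriangle>\<close> otherwise.
\<close>

section \<open>Union-closed families of sets\<close>

definition union_closed :: "'a set set \<Rightarrow> bool" where
  "union_closed F \<longleftrightarrow> (\<forall>S\<subseteq>F. \<Union>S \<in> F)"

lemma union_closedD: "union_closed F \<Longrightarrow> S \<subseteq> F \<Longrightarrow> \<Union>S \<in> F"
  by (simp add: union_closed_def)

lemma union_closed_image_Pow:
  assumes f_Union: "\<And>Xs. f (\<Union>Xs) = \<Union>(f ` Xs)"
  shows "union_closed {f X | X. X \<subseteq> U}"
  unfolding union_closed_def
proof (intro allI impI)
  fix Q assume Q: "Q \<subseteq> {f X | X. X \<subseteq> U}"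
  define Xs where "Xs = {X. X \<subseteq> U \<and> f X \<in> Q}"
  have "Q \<subseteq> f ` Xs"
  proof
    fix q assume "q \<in> Q"
    with Q obtain X where "X \<subseteq> U" "q = f X" by blast
    with \<open>q \<in> Q\<close> show "q \<in> f ` Xs" by (auto simp: Xs_def)
  qed
  moreover have "f ` Xs \<subseteq> Q" by (auto simp: Xs_def)
  ultimately have "f (\<Union>Xs) = \<Union>Q"
    unfolding f_Union by (simp add: subset_antisym)
  moreover have "\<Union>Xs \<subseteq> U" by (auto simp: Xs_def)
  ultimately show "\<Union>Q \<in> {f X | X. X \<subseteq> U}" by blast
qed

lemma is_lub_in_union_closed_iff:
  assumes "union_closed F" and "S \<subseteq> F"
  shows "is_lub_in F (\<subseteq>) S x \<longleftrightarrow> x = \<Union>S"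
proof
  assume "is_lub_in F (\<subseteq>) S x"
  moreover have "\<Union>S \<in> F" using assms by (rule union_closedD)
  ultimately show "x = \<Union>S" unfolding is_lub_in_def by (blast intro: subset_antisym)
qed (use assms in \<open>auto simp: union_closed_def is_lub_in_def\<close>)

lemma completely_join_irreducible_union_closed_iff:
  assumes F: "union_closed F"
  shows "completely_join_irreducible F (\<subseteq>) j \<longleftrightarrow>
    j \<in> F \<and> (\<exists>p\<in>j. \<forall>k\<in>F. p \<in> k \<longrightarrow> k \<subseteq> j \<longrightarrow> k = j)"
proof
  assume j: "completely_join_irreducible F (\<subseteq>) j"
  then have "j \<in> F" by (simp add: completely_join_irreducible_def)
  moreover have "\<exists>p\<in>j. \<forall>k\<in>F. p \<in> k \<longrightarrow> k \<subseteq> j \<longrightarrow> k = j"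
  proof (rule ccontr)
    \<comment> \<open>otherwise j is the union of the members of F strictly below it\<close>
    define S where "S = {k \<in> F. k \<subset> j}"
    have "S \<subseteq> F" by (auto simp: S_def)
    assume "\<not> ?thesis"
    then have "j = \<Union>S" unfolding S_def by blast
    then have "is_lub_in F (\<subseteq>) S j"
      using is_lub_in_union_closed_iff[OF F \<open>S \<subseteq> F\<close>] by simp
    with j \<open>S \<subseteq> F\<close> have "j \<in> S"
      unfolding completely_join_irreducible_def by simp
    then show False by (simp add: S_def)
  qed
  ultimately show "j \<in> F \<and> (\<exists>p\<in>j. \<forall>k\<in>F. p \<in> k \<longrightarrow> k \<subseteq> j \<longrightarrow> k = j)" ..
next
  assume "j \<in> F \<and> (\<exists>p\<in>j. \<forall>k\<in>F. p \<in> k \<longrightarrow> k \<subseteq> j \<longrightarrow> k = j)"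
  then obtain p where "j \<in> F" "p \<in> j" and p: "\<And>k. k \<in> F \<Longrightarrow> p \<in> k \<Longrightarrow> k \<subseteq> j \<Longrightarrow> k = j"
    by blast
  have "j \<in> S" if "S \<subseteq> F" and "is_lub_in F (\<subseteq>) S j" for S
  proof -
    have j: "j = \<Union>S" using that is_lub_in_union_closed_iff[OF F] by blast
    with \<open>p \<in> j\<close> obtain k where "k \<in> S" "p \<in> k" by blast
    with p[of k] j \<open>S \<subseteq> F\<close> show "j \<in> S" by auto
  qed
  with \<open>j \<in> F\<close> show "completely_join_irreducible F (\<subseteq>) j"
    unfolding completely_join_irreducible_def by blast
qed

lemma spatial_union_closed_iff:
  assumes F: "union_closed F"
  shows "spatial F (\<subseteq>) \<longleftrightarrow>
    (\<forall>x\<in>F. \<forall>p\<in>x. \<exists>j. completely_join_irreducible F (\<subseteq>) j \<and> j \<subseteq> x \<and> p \<in> j)"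
proof -
  let ?J = "\<lambda>x. {j. completely_join_irreducible F (\<subseteq>) j \<and> j \<subseteq> x}"
  have "?J x \<subseteq> F" for x
    by (auto simp: completely_join_irreducible_def)
  then have "is_lub_in F (\<subseteq>) (?J x) x \<longleftrightarrow> x = \<Union>(?J x)" for x
    by (rule is_lub_in_union_closed_iff[OF F])
  also have "x = \<Union>(?J x) \<longleftrightarrow>
      (\<forall>p\<in>x. \<exists>j. completely_join_irreducible F (\<subseteq>) j \<and> j \<subseteq> x \<and> p \<in> j)" for x
    by (auto simp: set_eq_iff)
  finally show ?thesis
    unfolding spatial_def by simp
qed

section \<open>Transfer along order embeddings\<close>

context
  fixes L :: "'b set" and le :: "'b \<Rightarrow> 'b \<Rightarrow> bool"
    and le' :: "'c \<Rightarrow> 'c \<Rightarrow> bool" and f :: "'b \<Rightarrow> 'c"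
  assumes order_embedding: "\<And>x y. x \<in> L \<Longrightarrow> y \<in> L \<Longrightarrow> le x y \<longleftrightarrow> le' (f x) (f y)"
    and inj: "inj_on f L"
begin

lemma is_lub_in_image_iff:
  assumes "S \<subseteq> L" and "x \<in> L"
  shows "is_lub_in (f ` L) le' (f ` S) (f x) \<longleftrightarrow> is_lub_in L le S x"
  using assms order_embedding unfolding is_lub_in_def by (auto simp: subset_iff)

lemma completely_join_irreducible_image_iff:
  assumes j: "j \<in> L"
  shows "completely_join_irreducible (f ` L) le' (f j) \<longleftrightarrow> completely_join_irreducible L le j"
proof -
  have "(\<forall>S'\<subseteq>f ` L. is_lub_in (f ` L) le' S' (f j) \<longrightarrow> f j \<in> S') \<longleftrightarrow>
        (\<forall>S\<subseteq>L. is_lub_in (f ` L) le' (f ` S) (f j) \<longrightarrow> f j \<in> f ` S)"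
    by (rule all_subset_image)
  also have "\<dots> \<longleftrightarrow> (\<forall>S\<subseteq>L. is_lub_in L le S j \<longrightarrow> j \<in> S)"
    using is_lub_in_image_iff[OF _ j] inj_on_image_mem_iff[OF inj j] by auto
  finally show ?thesis
    using j by (simp add: completely_join_irreducible_def imp_conjL)
qed

lemma spatial_image_iff: "spatial (f ` L) le' \<longleftrightarrow> spatial L le"
proof -
  let ?J = "\<lambda>x. {j. completely_join_irreducible L le j \<and> le j x}"
  have cji_in: "completely_join_irreducible L le j \<Longrightarrow> j \<in> L" for j
    by (simp add: completely_join_irreducible_def)
  have J: "{j'. completely_join_irreducible (f ` L) le' j' \<and> le' j' (f x)} = f ` ?J x"
    if "x \<in> L" for x
  proof (intro set_eqI iffI)
    fix j' assume "j' \<in> {j'. completely_join_irreducible (f ` L) le' j' \<and> le' j' (f x)}"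
    moreover from this obtain j where "j \<in> L" "j' = f j"
      by (auto simp: completely_join_irreducible_def)
    ultimately show "j' \<in> f ` ?J x"
      using that order_embedding completely_join_irreducible_image_iff by auto
  next
    fix j' assume "j' \<in> f ` ?J x"
    then show "j' \<in> {j'. completely_join_irreducible (f ` L) le' j' \<and> le' j' (f x)}"
      using that cji_in order_embedding completely_join_irreducible_image_iff by auto
  qed
  have "?J x \<subseteq> L" for x
    using cji_in by blast
  then show ?thesis
    unfolding spatial_def using J is_lub_in_image_iff by auto
qed

end

lemma completely_join_irreducible_set_embedding_iff:
  assumes order_embedding: "\<And>x y. x \<in> L \<Longrightarrow> y \<in> L \<Longrightarrow> le x y \<longleftrightarrow> f x \<subseteq> f y"
    and inj: "inj_on f L" and closed: "union_closed (f ` L)"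
  shows "completely_join_irreducible L le j \<longleftrightarrow>
    j \<in> L \<and> (\<exists>p\<in>f j. \<forall>k\<in>L. p \<in> f k \<longrightarrow> le k j \<longrightarrow> k = j)"
proof (cases "j \<in> L")
  case True
  have "completely_join_irreducible L le j \<longleftrightarrow> completely_join_irreducible (f ` L) (\<subseteq>) (f j)"
    using completely_join_irreducible_image_iff[of L le "(\<subseteq>)" f, OF order_embedding inj True] by simp
  also have "\<dots> \<longleftrightarrow> (\<exists>p\<in>f j. \<forall>k\<in>L. p \<in> f k \<longrightarrow> f k \<subseteq> f j \<longrightarrow> f k = f j)"
    using True by (simp add: completely_join_irreducible_union_closed_iff[OF closed])
  also have "\<dots> \<longleftrightarrow> (\<exists>p\<in>f j. \<forall>k\<in>L. p \<in> f k \<longrightarrow> le k j \<longrightarrow> k = j)"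
    using True by (simp add: order_embedding inj_on_eq_iff[OF inj])
  finally show ?thesis using True by simp
qed (simp add: completely_join_irreducible_def)

lemma spatial_set_embedding_iff:
  assumes order_embedding: "\<And>x y. x \<in> L \<Longrightarrow> y \<in> L \<Longrightarrow> le x y \<longleftrightarrow> f x \<subseteq> f y"
    and inj: "inj_on f L" and closed: "union_closed (f ` L)"
  shows "spatial L le \<longleftrightarrow>
    (\<forall>x\<in>L. \<forall>p\<in>f x. \<exists>j. completely_join_irreducible L le j \<and> le j x \<and> p \<in> f j)"
proof -
  have cji_in: "completely_join_irreducible L le j \<Longrightarrow> j \<in> L" for j
    by (simp add: completely_join_irreducible_def)
  note cji_image = completely_join_irreducible_image_iff[of L le "(\<subseteq>)" f, OF order_embedding inj]
  have "spatial L le \<longleftrightarrow> spatial (f ` L) (\<subseteq>)"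
    using spatial_image_iff[of L le "(\<subseteq>)" f, OF order_embedding inj] by simp
  also have "\<dots> \<longleftrightarrow> (\<forall>x\<in>L. \<forall>p\<in>f x.
      \<exists>j'. completely_join_irreducible (f ` L) (\<subseteq>) j' \<and> j' \<subseteq> f x \<and> p \<in> j')"
    by (simp add: spatial_union_closed_iff[OF closed])
  also have "\<dots> \<longleftrightarrow> (\<forall>x\<in>L. \<forall>p\<in>f x. \<exists>j. completely_join_irreducible L le j \<and> le j x \<and> p \<in> f j)"
  proof (intro ball_cong refl iffI)
    fix x p assume x: "x \<in> L"
    assume "\<exists>j'. completely_join_irreducible (f ` L) (\<subseteq>) j' \<and> j' \<subseteq> f x \<and> p \<in> j'"
    then obtain j where "j \<in> L" "completely_join_irreducible (f ` L) (\<subseteq>) (f j)"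
      and "f j \<subseteq> f x" "p \<in> f j"
      by (auto simp: completely_join_irreducible_def)
    then show "\<exists>j. completely_join_irreducible L le j \<and> le j x \<and> p \<in> f j"
      using cji_image order_embedding x by blast
  next
    fix x p assume x: "x \<in> L"
    assume "\<exists>j. completely_join_irreducible L le j \<and> le j x \<and> p \<in> f j"
    then obtain j where "completely_join_irreducible L le j" "le j x" "p \<in> f j"
      by blast
    then show "\<exists>j'. completely_join_irreducible (f ` L) (\<subseteq>) j' \<and> j' \<subseteq> f x \<and> p \<in> j'"
      using cji_image order_embedding x cji_in by blast
  qed
  finally show ?thesis .
qed

section \<open>Pairs of upper approximations\<close>

lemma uppR_Union: "uppR U R (\<Union>Xs) = \<Union>(uppR U R ` Xs)"
  by (auto simp: uppR_def)

lemma uppC_Union: "uppC U R (\<Union>Xs) = \<Union>(uppC U R ` Xs)"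
  by (auto simp: uppC_def)

lemma uppR_mono: "X \<subseteq> Y \<Longrightarrow> uppR U R X \<subseteq> uppR U R Y"
  by (auto simp: uppR_def)

lemma union_closed_uppR_sets: "union_closed (uppR_sets U R)"
  unfolding uppR_sets_def by (rule union_closed_image_Pow) (rule uppR_Union)

lemma union_closed_uppC_sets: "union_closed (uppC_sets U R)"
  unfolding uppC_sets_def by (rule union_closed_image_Pow) (rule uppC_Union)

lemma Inl_in_Plus_iff [simp]: "Inl a \<in> A <+> B \<longleftrightarrow> a \<in> A"
  by auto

lemma Inr_in_Plus_iff [simp]: "Inr b \<in> A <+> B \<longleftrightarrow> b \<in> B"
  by auto

lemma Plus_subset_Plus_iff [simp]: "A <+> B \<subseteq> C <+> D \<longleftrightarrow> A \<subseteq> C \<and> B \<subseteq> D"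
  by blast

lemma Plus_eq_Plus_iff: "A <+> B = C <+> D \<longleftrightarrow> A = C \<and> B = D"
  by (simp add: set_eq_subset) blast

lemma Union_image_Plus: "\<Union>((\<lambda>p. fst p <+> snd p) ` P) = \<Union>(fst ` P) <+> \<Union>(snd ` P)"
  by blast

text \<open>DM(RS) transported along \<open>A \<mapsto> A\<^sup>\<vartriangle>\<close>, which maps \<open>\<wp>(U)\<^sup>\<blacktriangledown>\<close>
  isomorphically onto \<open>\<wp>(U)\<^sup>\<vartriangle>\<close> (see \<open>image_DMRS_eq_upper_pairs\<close>).\<close>

definition upper_pairs :: "'a set \<Rightarrow> ('a \<times> 'a) set \<Rightarrow> ('a set \<times> 'a set) set" where
  "upper_pairs U R = {(E, B). E \<in> uppC_sets U R \<and> B \<in> uppR_sets U R \<and>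
      uppR U R E \<subseteq> B \<and> E \<inter> singR U R = B \<inter> singR U R}"

lemma upper_pairs_Union:
  assumes P: "P \<subseteq> upper_pairs U R"
  shows "(\<Union>(fst ` P), \<Union>(snd ` P)) \<in> upper_pairs U R"
proof -
  have fst: "fst p \<in> uppC_sets U R" and snd: "snd p \<in> uppR_sets U R"
    and upp: "uppR U R (fst p) \<subseteq> snd p"
    and sing: "fst p \<inter> singR U R = snd p \<inter> singR U R" if "p \<in> P" for p
    using subsetD[OF P that] by (simp_all add: upper_pairs_def split: prod.splits)
  have "\<Union>(fst ` P) \<in> uppC_sets U R"
    using fst by (intro union_closedD[OF union_closed_uppC_sets]) blast
  moreover have "\<Union>(snd ` P) \<in> uppR_sets U R"
    using snd by (intro union_closedD[OF union_closed_uppR_sets]) blast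
  moreover have "uppR U R (\<Union>(fst ` P)) \<subseteq> \<Union>(snd ` P)"
    using upp unfolding uppR_Union image_image by (intro UN_mono) auto
  moreover have "\<Union>(fst ` P) \<inter> singR U R = \<Union>(snd ` P) \<inter> singR U R"
  proof -
    have "\<Union>(fst ` P) \<inter> singR U R = (\<Union>p\<in>P. fst p \<inter> singR U R)" by blast
    also have "\<dots> = (\<Union>p\<in>P. snd p \<inter> singR U R)" using sing by simp
    also have "\<dots> = \<Union>(snd ` P) \<inter> singR U R" by blast
    finally show ?thesis .
  qed
  ultimately show ?thesis
    unfolding upper_pairs_def by simp
qed

lemma union_closed_Plus_upper_pairs:
  "union_closed ((\<lambda>p. fst p <+> snd p) ` upper_pairs U R)"
  unfolding union_closed_def
proof (intro allI impI)
  fix S assume "S \<subseteq> (\<lambda>p. fst p <+> snd p) ` upper_pairs U R"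
  then obtain P where P: "P \<subseteq> upper_pairs U R" and S: "S = (\<lambda>p. fst p <+> snd p) ` P"
    by (rule subset_imageE)
  have "\<Union>S = \<Union>(fst ` P) <+> \<Union>(snd ` P)"
    unfolding S by (rule Union_image_Plus)
  with upper_pairs_Union[OF P] show "\<Union>S \<in> (\<lambda>p. fst p <+> snd p) ` upper_pairs U R"
    by (intro image_eqI) auto
qed

lemma pair_le_iff_Plus_subset: "pair_le p q \<longleftrightarrow> fst p <+> snd p \<subseteq> fst q <+> snd q"
  by (simp add: pair_le_def)

lemma inj_Plus_pair: "inj (\<lambda>p. fst p <+> snd p)"
  by (rule injI) (simp add: Plus_eq_Plus_iff prod_eq_iff)

lemmas upper_pairs_Plus_embedding =
  pair_le_iff_Plus_subset inj_on_subset[OF inj_Plus_pair subset_UNIV] union_closed_Plus_upper_pairs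

lemma completely_join_irreducible_upper_pairs_iff:
  "completely_join_irreducible (upper_pairs U R) pair_le j \<longleftrightarrow> j \<in> upper_pairs U R \<and>
    (\<exists>p\<in>fst j <+> snd j. \<forall>k\<in>upper_pairs U R. p \<in> fst k <+> snd k \<longrightarrow> pair_le k j \<longrightarrow> k = j)"
  by (rule completely_join_irreducible_set_embedding_iff[where f = "\<lambda>p. fst p <+> snd p",
        OF upper_pairs_Plus_embedding])

lemma spatial_upper_pairs_iff:
  "spatial (upper_pairs U R) pair_le \<longleftrightarrow> (\<forall>x\<in>upper_pairs U R. \<forall>p\<in>fst x <+> snd x.
    \<exists>j. completely_join_irreducible (upper_pairs U R) pair_le j \<and> pair_le j x \<and> p \<in> fst j <+> snd j)"
  by (rule spatial_set_embedding_iff[where f = "\<lambda>p. fst p <+> snd p", OF upper_pairs_Plus_embedding])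

lemma completely_join_irreducible_upper_pairsE:
  assumes "completely_join_irreducible (upper_pairs U R) pair_le (E, B)"
  obtains p where "(E, B) \<in> upper_pairs U R" and "p \<in> E <+> B"
    and "\<And>E' B'. (E', B') \<in> upper_pairs U R \<Longrightarrow> p \<in> E' <+> B' \<Longrightarrow> E' \<subseteq> E \<Longrightarrow> B' \<subseteq> B \<Longrightarrow>
      E' = E \<and> B' = B"
proof -
  from assms obtain p where EB: "(E, B) \<in> upper_pairs U R" and p: "p \<in> E <+> B"
    and min: "\<forall>k\<in>upper_pairs U R. p \<in> fst k <+> snd k \<longrightarrow> pair_le k (E, B) \<longrightarrow> k = (E, B)"
    unfolding completely_join_irreducible_upper_pairs_iff by auto
  show ?thesis
  proof (rule that[OF EB p])
    fix E' B' assume "(E', B') \<in> upper_pairs U R" "p \<in> E' <+> B'" "E' \<subseteq> E" "B' \<subseteq> B"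
    then show "E' = E \<and> B' = B"
      using min[rule_format, of "(E', B')"] by (simp add: pair_le_def)
  qed
qed

lemma completely_join_irreducible_upper_pairsI:
  assumes "(E, B) \<in> upper_pairs U R" and "p \<in> E <+> B"
    and "\<And>E' B'. (E', B') \<in> upper_pairs U R \<Longrightarrow> p \<in> E' <+> B' \<Longrightarrow> E' \<subseteq> E \<Longrightarrow> B' \<subseteq> B \<Longrightarrow>
      E' = E \<and> B' = B"
  shows "completely_join_irreducible (upper_pairs U R) pair_le (E, B)"
  unfolding completely_join_irreducible_upper_pairs_iff
proof (intro conjI bexI ballI impI)
  fix k assume "k \<in> upper_pairs U R" "p \<in> fst k <+> snd k" "pair_le k (E, B)"
  then show "k = (E, B)"
    using assms(3)[of "fst k" "snd k"] by (simp add: pair_le_def prod_eq_iff)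
qed (use assms in simp_all)

lemma spatial_upper_pairsD:
  assumes "spatial (upper_pairs U R) pair_le" and "(E, B) \<in> upper_pairs U R" and "p \<in> E <+> B"
  obtains E' B' where "completely_join_irreducible (upper_pairs U R) pair_le (E', B')"
    and "E' \<subseteq> E" and "B' \<subseteq> B" and "p \<in> E' <+> B'"
proof -
  from assms obtain j where "completely_join_irreducible (upper_pairs U R) pair_le j"
    and "pair_le j (E, B)" and "p \<in> fst j <+> snd j"
    unfolding spatial_upper_pairs_iff by fastforce
  with that show ?thesis
    by (cases j) (simp add: pair_le_def)
qed

lemma spatial_upper_pairsI:
  assumes "\<And>E B p. (E, B) \<in> upper_pairs U R \<Longrightarrow> p \<in> E <+> B \<Longrightarrow>
    \<exists>E' B'. completely_join_irreducible (upper_pairs U R) pair_le (E', B') \<and>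
      E' \<subseteq> E \<and> B' \<subseteq> B \<and> p \<in> E' <+> B'"
  shows "spatial (upper_pairs U R) pair_le"
  unfolding spatial_upper_pairs_iff
proof (intro ballI)
  fix x p assume "x \<in> upper_pairs U R" and "p \<in> fst x <+> snd x"
  with assms[of "fst x" "snd x" p] show
    "\<exists>j. completely_join_irreducible (upper_pairs U R) pair_le j \<and> pair_le j x \<and> p \<in> fst j <+> snd j"
    by (auto simp: pair_le_def)
qed

section \<open>Reflexive approximation spaces\<close>

locale rough_relation =
  fixes U :: "'a set" and R :: "('a \<times> 'a) set"
  assumes R_subset: "R \<subseteq> U \<times> U"
begin

lemma lowR_uppC_lowR: "lowR U R (uppC U R (lowR U R X)) = lowR U R X"
  using R_subset by (auto simp: lowR_def uppC_def succR_def predR_def; blast)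

lemma uppC_lowR_uppC: "uppC U R (lowR U R (uppC U R X)) = uppC U R X"
  using R_subset by (auto simp: lowR_def uppC_def succR_def predR_def; blast)

lemma uppC_subset_uppC_iff:
  assumes "A \<in> lowR_sets U R" and "A' \<in> lowR_sets U R"
  shows "uppC U R A \<subseteq> uppC U R A' \<longleftrightarrow> A \<subseteq> A'"
proof
  assume "uppC U R A \<subseteq> uppC U R A'"
  then have "lowR U R (uppC U R A) \<subseteq> lowR U R (uppC U R A')"
    by (auto simp: lowR_def)
  with assms show "A \<subseteq> A'"
    by (auto simp: lowR_sets_def lowR_uppC_lowR)
qed (auto simp: uppC_def)

end

locale reflexive_rough_relation = rough_relation +
  assumes refl: "\<forall>x\<in>U. (x, x) \<in> R"
begin

lemma singR_R_iff:
  assumes "x \<in> singR U R"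
  shows "(x, y) \<in> R \<longleftrightarrow> y = x"
proof -
  from assms have "x \<in> U" and "card (succR R x) = 1"
    by (auto simp: singR_def)
  then obtain a where "succR R x = {a}"
    by (auto simp: card_1_singleton_iff)
  moreover have "x \<in> succR R x"
    using refl \<open>x \<in> U\<close> by (simp add: succR_def)
  ultimately have "succR R x = {x}" by simp
  then show ?thesis by (auto simp: succR_def)
qed

lemma singR_subset: "singR U R \<subseteq> U"
  by (auto simp: singR_def)

lemma uppR_inter_singR:
  assumes "E \<subseteq> U"
  shows "uppR U R E \<inter> singR U R = E \<inter> singR U R"
  using assms refl singR_R_iff singR_subset by (auto simp: uppR_def succR_def)

lemma uppC_inter_singR:
  assumes "A \<in> lowR_sets U R"
  shows "uppC U R A \<inter> singR U R = A \<inter> singR U R"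
proof
  obtain X where X: "A = lowR U R X"
    using assms by (auto simp: lowR_sets_def)
  show "uppC U R A \<inter> singR U R \<subseteq> A \<inter> singR U R"
  proof
    fix s assume s: "s \<in> uppC U R A \<inter> singR U R"
    then obtain a where "a \<in> A" and "(a, s) \<in> R"
      by (auto simp: uppC_def predR_def)
    then have "s \<in> X"
      using X by (auto simp: lowR_def succR_def)
    moreover have "succR R s = {s}"
      using s singR_R_iff by (auto simp: succR_def)
    ultimately show "s \<in> A \<inter> singR U R"
      using s X singR_subset by (auto simp: lowR_def)
  qed
  show "A \<inter> singR U R \<subseteq> uppC U R A \<inter> singR U R"
    using refl X by (auto simp: uppC_def predR_def lowR_def)
qed

lemma uppC_sets_if_subset_singR:
  assumes T: "T \<subseteq> singR U R"
  shows "T \<in> uppC_sets U R"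
proof -
  have "T \<subseteq> U"
    using T singR_subset by blast
  moreover have "uppC U R T = T"
  proof
    show "uppC U R T \<subseteq> T"
      using T singR_R_iff by (auto simp: uppC_def predR_def)
    show "T \<subseteq> uppC U R T"
      using \<open>T \<subseteq> U\<close> refl by (auto simp: uppC_def predR_def)
  qed
  ultimately show ?thesis
    unfolding uppC_sets_def by blast
qed

lemma uppR_inter_singR_subset:
  assumes "K \<in> uppR_sets U R"
  shows "uppR U R (K \<inter> singR U R) \<subseteq> K"
proof
  obtain X where X: "K = uppR U R X"
    using assms by (auto simp: uppR_sets_def)
  fix x assume "x \<in> uppR U R (K \<inter> singR U R)"
  then obtain s where s: "(x, s) \<in> R" "s \<in> K" "s \<in> singR U R"
    by (auto simp: uppR_def succR_def)
  then have "s \<in> X"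
    using X singR_R_iff by (auto simp: uppR_def succR_def)
  with s X R_subset show "x \<in> K"
    by (auto simp: uppR_def succR_def)
qed

lemma upper_pairs_inter_singR:
  assumes K: "K \<in> uppR_sets U R"
  shows "(K \<inter> singR U R, K) \<in> upper_pairs U R"
  using uppC_sets_if_subset_singR uppR_inter_singR_subset[OF K] K
  by (auto simp: upper_pairs_def)

lemma upper_pairs_uppR:
  assumes E: "E \<in> uppC_sets U R"
  shows "(E, uppR U R E) \<in> upper_pairs U R"
proof -
  have "E \<subseteq> U"
    using E by (auto simp: uppC_sets_def uppC_def)
  then show ?thesis
    using E uppR_inter_singR by (auto simp: upper_pairs_def uppR_sets_def)
qed

lemma image_DMRS_eq_upper_pairs: "map_prod (uppC U R) id ` DMRS U R = upper_pairs U R"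
proof (intro equalityI subsetI)
  fix q assume "q \<in> map_prod (uppC U R) id ` DMRS U R"
  then obtain A B where AB: "(A, B) \<in> DMRS U R" and q: "q = (uppC U R A, B)"
    by auto
  then have A: "A \<in> lowR_sets U R"
    by (simp add: DMRS_def)
  then have "uppC U R A \<in> uppC_sets U R"
    by (auto simp: uppC_sets_def lowR_sets_def lowR_def)
  then show "q \<in> upper_pairs U R"
    using AB q uppC_inter_singR[OF A] by (auto simp: DMRS_def upper_pairs_def)
next
  fix q assume "q \<in> upper_pairs U R"
  then obtain E B where q: "q = (E, B)" and E: "E \<in> uppC_sets U R"
    and EB: "B \<in> uppR_sets U R" "uppR U R E \<subseteq> B" "E \<inter> singR U R = B \<inter> singR U R"
    by (auto simp: upper_pairs_def)
  have A: "lowR U R E \<in> lowR_sets U R"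
    using E by (auto simp: uppC_sets_def uppC_def lowR_sets_def)
  have E_eq: "uppC U R (lowR U R E) = E"
    using E by (auto simp: uppC_sets_def uppC_lowR_uppC)
  have "(lowR U R E, B) \<in> DMRS U R"
    using A EB uppC_inter_singR[OF A] by (simp add: DMRS_def E_eq)
  then show "q \<in> map_prod (uppC U R) id ` DMRS U R"
    using q E_eq by (intro image_eqI) auto
qed

lemma spatial_DMRS_iff_upper_pairs:
  "spatial (DMRS U R) pair_le \<longleftrightarrow> spatial (upper_pairs U R) pair_le"
proof -
  have order_embedding: "pair_le x y \<longleftrightarrow> pair_le (map_prod (uppC U R) id x) (map_prod (uppC U R) id y)"
    if "x \<in> DMRS U R" and "y \<in> DMRS U R" for x y
    using that uppC_subset_uppC_iff by (auto simp: DMRS_def pair_le_def map_prod_def split: prod.splits)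
  have "inj_on (map_prod (uppC U R) id) (DMRS U R)"
  proof (rule inj_onI)
    fix x y assume "x \<in> DMRS U R" "y \<in> DMRS U R" "map_prod (uppC U R) id x = map_prod (uppC U R) id y"
    then have "pair_le x y" and "pair_le y x"
      using order_embedding[of x y] order_embedding[of y x] by (simp_all add: pair_le_def)
    then show "x = y"
      by (auto simp: pair_le_def prod_eq_iff)
  qed
  from spatial_image_iff[of "DMRS U R" pair_le pair_le "map_prod (uppC U R) id", OF order_embedding this] show ?thesis
    by (simp add: image_DMRS_eq_upper_pairs)
qed

lemma completely_join_irreducible_uppR_sets_if_upper_pairs:
  assumes j: "completely_join_irreducible (upper_pairs U R) pair_le (E, B)"
    and E: "E \<subseteq> singR U R"
  shows "completely_join_irreducible (uppR_sets U R) (\<subseteq>) B"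
proof -
  obtain p where EB: "(E, B) \<in> upper_pairs U R" and p: "p \<in> E <+> B"
    and min: "\<And>E' B'. (E', B') \<in> upper_pairs U R \<Longrightarrow> p \<in> E' <+> B' \<Longrightarrow> E' \<subseteq> E \<Longrightarrow> B' \<subseteq> B \<Longrightarrow>
      E' = E \<and> B' = B"
    using completely_join_irreducible_upper_pairsE[OF j] by blast
  have B: "B \<in> uppR_sets U R" and sing: "E \<inter> singR U R = B \<inter> singR U R"
    using EB by (simp_all add: upper_pairs_def)
  obtain q where "q \<in> B" and q: "p = Inl q \<and> q \<in> singR U R \<or> p = Inr q"
    using p E sing by blast
  have "K = B" if K: "K \<in> uppR_sets U R" "q \<in> K" "K \<subseteq> B" for K
  proof -
    have "(K \<inter> singR U R, K) \<in> upper_pairs U R"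
      using K(1) by (rule upper_pairs_inter_singR)
    moreover have "p \<in> (K \<inter> singR U R) <+> K"
      using q K(2) by auto
    moreover have "K \<inter> singR U R \<subseteq> E"
      using K(3) sing by blast
    ultimately show "K = B"
      using min K(3) by blast
  qed
  with B \<open>q \<in> B\<close> show ?thesis
    unfolding completely_join_irreducible_union_closed_iff[OF union_closed_uppR_sets] by blast
qed

lemma completely_join_irreducible_uppC_sets_if_upper_pairs:
  assumes j: "completely_join_irreducible (upper_pairs U R) pair_le (E, B)"
    and E: "\<not> E \<subseteq> singR U R"
  shows "completely_join_irreducible (uppC_sets U R) (\<subseteq>) E"
proof -
  obtain p where EB: "(E, B) \<in> upper_pairs U R" and p: "p \<in> E <+> B"
    and min: "\<And>E' B'. (E', B') \<in> upper_pairs U R \<Longrightarrow> p \<in> E' <+> B' \<Longrightarrow> E' \<subseteq> E \<Longrightarrow> B' \<subseteq> B \<Longrightarrow>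
      E' = E \<and> B' = B"
    using completely_join_irreducible_upper_pairsE[OF j] by blast
  have E_in: "E \<in> uppC_sets U R" and B: "B \<in> uppR_sets U R"
    and upp: "uppR U R E \<subseteq> B" and sing: "E \<inter> singR U R = B \<inter> singR U R"
    using EB by (simp_all add: upper_pairs_def)
  obtain q where p_eq: "p = Inl q" and "q \<in> E"
  proof (cases p)
    case (Inl q)
    with p that show ?thesis by simp
  next
    case (Inr q)
    have "(B \<inter> singR U R, B) \<in> upper_pairs U R"
      using B by (rule upper_pairs_inter_singR)
    moreover have "p \<in> (B \<inter> singR U R) <+> B"
      using p Inr by simp
    moreover have "B \<inter> singR U R \<subseteq> E"
      using sing by blast
    ultimately have "B \<inter> singR U R = E"
      using min by blast
    with E show ?thesis by blast
  qed
  have "K = E" if K: "K \<in> uppC_sets U R" "q \<in> K" "K \<subseteq> E" for K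
  proof -
    have "(K, uppR U R K) \<in> upper_pairs U R"
      using K(1) by (rule upper_pairs_uppR)
    moreover have "p \<in> K <+> uppR U R K"
      using p_eq K(2) by simp
    moreover have "uppR U R K \<subseteq> B"
      using uppR_mono[OF K(3)] upp by blast
    ultimately show "K = E"
      using min K(3) by blast
  qed
  with E_in \<open>q \<in> E\<close> show ?thesis
    unfolding completely_join_irreducible_union_closed_iff[OF union_closed_uppC_sets] by blast
qed

lemma completely_join_irreducible_upper_pairs_if_uppR_sets:
  assumes "completely_join_irreducible (uppR_sets U R) (\<subseteq>) K"
  shows "completely_join_irreducible (upper_pairs U R) pair_le (K \<inter> singR U R, K)"
proof -
  obtain q where K: "K \<in> uppR_sets U R" "q \<in> K"
    and min: "\<And>K'. K' \<in> uppR_sets U R \<Longrightarrow> q \<in> K' \<Longrightarrow> K' \<subseteq> K \<Longrightarrow> K' = K"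
    using assms unfolding completely_join_irreducible_union_closed_iff[OF union_closed_uppR_sets]
    by blast
  show ?thesis
  proof (rule completely_join_irreducible_upper_pairsI)
    show "(K \<inter> singR U R, K) \<in> upper_pairs U R"
      using K(1) by (rule upper_pairs_inter_singR)
    show "Inr q \<in> (K \<inter> singR U R) <+> K"
      using K(2) by simp
  next
    fix E' B' assume EB': "(E', B') \<in> upper_pairs U R" "Inr q \<in> E' <+> B'"
      "E' \<subseteq> K \<inter> singR U R" "B' \<subseteq> K"
    then have "B' = K"
      using min by (auto simp: upper_pairs_def)
    moreover have "E' \<inter> singR U R = B' \<inter> singR U R"
      using EB'(1) by (simp add: upper_pairs_def)
    ultimately show "E' = K \<inter> singR U R \<and> B' = K"
      using EB'(3) by blast
  qed
qed

lemma completely_join_irreducible_upper_pairs_if_uppC_sets: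
  assumes "completely_join_irreducible (uppC_sets U R) (\<subseteq>) K"
  shows "completely_join_irreducible (upper_pairs U R) pair_le (K, uppR U R K)"
proof -
  obtain q where K: "K \<in> uppC_sets U R" "q \<in> K"
    and min: "\<And>K'. K' \<in> uppC_sets U R \<Longrightarrow> q \<in> K' \<Longrightarrow> K' \<subseteq> K \<Longrightarrow> K' = K"
    using assms unfolding completely_join_irreducible_union_closed_iff[OF union_closed_uppC_sets]
    by blast
  show ?thesis
  proof (rule completely_join_irreducible_upper_pairsI)
    show "(K, uppR U R K) \<in> upper_pairs U R"
      using K(1) by (rule upper_pairs_uppR)
    show "Inl q \<in> K <+> uppR U R K"
      using K(2) by simp
  next
    fix E' B' assume EB': "(E', B') \<in> upper_pairs U R" "Inl q \<in> E' <+> B'"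
      "E' \<subseteq> K" "B' \<subseteq> uppR U R K"
    then have "E' = K"
      using min by (auto simp: upper_pairs_def)
    moreover have "uppR U R E' \<subseteq> B'"
      using EB'(1) by (simp add: upper_pairs_def)
    ultimately show "E' = K \<and> B' = uppR U R K"
      using EB'(4) by blast
  qed
qed

lemma spatial_uppR_sets_if_spatial_upper_pairs:
  assumes "spatial (upper_pairs U R) pair_le"
  shows "spatial (uppR_sets U R) (\<subseteq>)"
  unfolding spatial_union_closed_iff[OF union_closed_uppR_sets]
proof (intro ballI)
  fix K z assume K: "K \<in> uppR_sets U R" and "z \<in> K"
  have "(K \<inter> singR U R, K) \<in> upper_pairs U R"
    using K by (rule upper_pairs_inter_singR)
  moreover have "Inr z \<in> (K \<inter> singR U R) <+> K"
    using \<open>z \<in> K\<close> by simp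
  ultimately obtain E B where j: "completely_join_irreducible (upper_pairs U R) pair_le (E, B)"
    and "E \<subseteq> K \<inter> singR U R" "B \<subseteq> K" "z \<in> B"
    using assms by (elim spatial_upper_pairsD) auto
  with completely_join_irreducible_uppR_sets_if_upper_pairs[OF j]
  show "\<exists>j. completely_join_irreducible (uppR_sets U R) (\<subseteq>) j \<and> j \<subseteq> K \<and> z \<in> j"
    by blast
qed

lemma spatial_uppC_sets_if_spatial_upper_pairs:
  assumes "spatial (upper_pairs U R) pair_le"
  shows "spatial (uppC_sets U R) (\<subseteq>)"
  unfolding spatial_union_closed_iff[OF union_closed_uppC_sets]
proof (intro ballI)
  fix K z assume K: "K \<in> uppC_sets U R" and "z \<in> K"
  show "\<exists>j. completely_join_irreducible (uppC_sets U R) (\<subseteq>) j \<and> j \<subseteq> K \<and> z \<in> j"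
  proof (cases "z \<in> singR U R")
    case True
    then have "{z} \<in> uppC_sets U R"
      by (simp add: uppC_sets_if_subset_singR)
    then have "completely_join_irreducible (uppC_sets U R) (\<subseteq>) {z}"
      unfolding completely_join_irreducible_union_closed_iff[OF union_closed_uppC_sets] by blast
    with \<open>z \<in> K\<close> show ?thesis by blast
  next
    case False
    have "(K, uppR U R K) \<in> upper_pairs U R"
      using K by (rule upper_pairs_uppR)
    moreover have "Inl z \<in> K <+> uppR U R K"
      using \<open>z \<in> K\<close> by simp
    ultimately obtain E B where j: "completely_join_irreducible (upper_pairs U R) pair_le (E, B)"
      and "E \<subseteq> K" "z \<in> E"
      using assms by (elim spatial_upper_pairsD) auto
    with False completely_join_irreducible_uppC_sets_if_upper_pairs[OF j] show ?thesis
      by blast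
  qed
qed

lemma spatial_upper_pairs_if_spatial_uppR_uppC:
  assumes R: "spatial (uppR_sets U R) (\<subseteq>)" and C: "spatial (uppC_sets U R) (\<subseteq>)"
  shows "spatial (upper_pairs U R) pair_le"
proof (rule spatial_upper_pairsI)
  fix E B p assume EB: "(E, B) \<in> upper_pairs U R" and p: "p \<in> E <+> B"
  have E: "E \<in> uppC_sets U R" and B: "B \<in> uppR_sets U R"
    and upp: "uppR U R E \<subseteq> B" and sing: "E \<inter> singR U R = B \<inter> singR U R"
    using EB by (simp_all add: upper_pairs_def)
  from p show "\<exists>E' B'. completely_join_irreducible (upper_pairs U R) pair_le (E', B') \<and>
      E' \<subseteq> E \<and> B' \<subseteq> B \<and> p \<in> E' <+> B'"
  proof (elim PlusE)
    fix z assume "z \<in> E" and p_eq: "p = Inl z"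
    then obtain K where K: "completely_join_irreducible (uppC_sets U R) (\<subseteq>) K" "K \<subseteq> E" "z \<in> K"
      using C E unfolding spatial_union_closed_iff[OF union_closed_uppC_sets] by blast
    moreover have "uppR U R K \<subseteq> B"
      using uppR_mono[OF K(2)] upp by blast
    ultimately show ?thesis
      using completely_join_irreducible_upper_pairs_if_uppC_sets p_eq by blast
  next
    fix z assume "z \<in> B" and p_eq: "p = Inr z"
    then obtain K where K: "completely_join_irreducible (uppR_sets U R) (\<subseteq>) K" "K \<subseteq> B" "z \<in> K"
      using R B unfolding spatial_union_closed_iff[OF union_closed_uppR_sets] by blast
    moreover have "K \<inter> singR U R \<subseteq> E"
      using K(2) sing by blast
    ultimately show ?thesis
      using completely_join_irreducible_upper_pairs_if_uppR_sets p_eq by blast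
  qed
qed

end

theorem mainTheorem5:
  fixes U :: "'a set" and R :: "('a \<times> 'a) set"
  assumes "R \<subseteq> U \<times> U"
    and "\<forall>x\<in>U. (x, x) \<in> R"
  shows "spatial (DMRS U R) pair_le \<longleftrightarrow>
         (spatial (uppR_sets U R) (\<subseteq>) \<and> spatial (uppC_sets U R) (\<subseteq>))"
proof -
  interpret reflexive_rough_relation U R
    using assms by unfold_locales
  have "spatial (DMRS U R) pair_le \<longleftrightarrow> spatial (upper_pairs U R) pair_le"
    by (rule spatial_DMRS_iff_upper_pairs)
  also have "\<dots> \<longleftrightarrow> spatial (uppR_sets U R) (\<subseteq>) \<and> spatial (uppC_sets U R) (\<subseteq>)"
    using spatial_uppR_sets_if_spatial_upper_pairs spatial_uppC_sets_if_spatial_upper_pairs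
      spatial_upper_pairs_if_spatial_uppR_uppC by blast
  finally show ?thesis .
qed

end
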